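(* Let $k\ge 2$ and $\Delta\ge 2^{4^k+1}$ be integers, let $Q=\{Q_1,\dots,Q_\Delta\}$ be an arbitrary multiset in $h_1(\Delta)$, and let $P_\infty$ be the element of $Q$ described in the context. Let $\alpha:\{1,\dots,\Delta\}\to\{\mathrm{out},\mathrm{in}\}$ be any function. Let $\mathcal I\subseteq\{1,\dots,\Delta\}$ be the set of indices $i$ with $\{Q_i,P_\infty\}\notin g_1(\Delta)$ and $11\dots1\notin Q_i$. For $\mathcal J\subseteq\mathcal I$, let $N(\mathcal J)\subseteq\{1,\dots,\Delta\}$ be the set of indices $i$ for which there is $j\in\mathcal J$ with $\{Q_i,Q_j\}\in g_1(\Delta)$ and $\alpha(i)\ne\alpha(j)$. Then there is $\mathcal J^*\subseteq\mathcal I$ with $|\mathcal J^*|>|N(\mathcal J^* )|$ such that $\alpha(j)\neq\alpha(i)$ for all $j\in\mathcal J^*$, $i\in N(\mathcal J^* )$.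
   Context: A trit sequence of length $k$ is a word $a_1\dots a_k$ with $a_j\in\{0,1,2\}$; it "has an $i$ at position $j$" if $a_j=i$; tritwise addition adds entries position by position. $g_1(\Delta)$ is the set of all 2-element multisets $\{W,X\}$ of sets of trit sequences of length $k$ such that there exist $w\in W$, $x\in X$ whose tritwise sum is $22\dots2$. $h_1(\Delta)$ is the set of all multisets $\{W_1,\dots,W_\Delta\}$ of sets of trit sequences of length $k$ such that (A) for any $w_1\in W_1,\dots,w_\Delta\in W_\Delta$ there is an index $1\le j\le k$ such that the number of $w_i$ with a $2$ at position $j$ is strictly greater than the number of $w_i$ with a $0$ at position $j$, and at most $k$ of the $w_i$ have a $0$ at position $j$; and (B) adding any trit sequence of length $k$ to any single $W_i$ yields a multiset violating (A). For $Q\in h_1(\Delta)$ with $\Delta\ge 2^{4^k+1}$, $P_\infty$ denotes the unique element of $Q$ that has multiplicity at least $\Delta-2^{4^k}$ in $Q$ and contains $11\dots1$ (such an element exists and is unique). *)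

theory Defs
  imports Main "HOL-Library.Multiset"
begin

definition tseq :: "nat \<Rightarrow> nat list set" where
  "tseq k = {w. length w = k \<and> set w \<subseteq> {0,1,2}}"

definition ones :: "nat \<Rightarrow> nat list" where
  "ones k = replicate k 1"

definition twos :: "nat \<Rightarrow> nat list" where
  "twos k = replicate k 2"

definition tadd :: "nat list \<Rightarrow> nat list \<Rightarrow> nat list" where
  "tadd w x = map2 (+) w x"

definition g1 :: "nat \<Rightarrow> nat list set multiset set" where
  "g1 k = {M. \<exists>W X. M = {#W, X#} \<and> W \<subseteq> tseq k \<and> X \<subseteq> tseq k \<and>
                 (\<exists>w\<in>W. \<exists>x\<in>X. tadd w x = twos k)}"

definition condA :: "nat \<Rightarrow> nat \<Rightarrow> (nat \<Rightarrow> nat list set) \<Rightarrow> bool" where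
  "condA k \<Delta> Ws \<longleftrightarrow>
     (\<forall>w. (\<forall>i\<in>{1..\<Delta>}. w i \<in> Ws i) \<longrightarrow>
        (\<exists>j<k. card {i\<in>{1..\<Delta>}. w i ! j = 2} > card {i\<in>{1..\<Delta>}. w i ! j = 0}
             \<and> card {i\<in>{1..\<Delta>}. w i ! j = 0} \<le> k))"

definition h1 :: "nat \<Rightarrow> nat \<Rightarrow> nat list set multiset set" where
  "h1 k \<Delta> = {M. \<exists>Ws. M = image_mset Ws (mset_set {1..\<Delta>}) \<and>
                     (\<forall>i\<in>{1..\<Delta>}. Ws i \<subseteq> tseq k) \<and>
                     condA k \<Delta> Ws \<and>
                     (\<forall>i\<in>{1..\<Delta>}. \<forall>t\<in>tseq k. t \<notin> Ws i \<longrightarrow>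
                        \<not> condA k \<Delta> (Ws(i := insert t (Ws i))))}"

datatype orient = Out | In

end

theory Submission
  imports Defs "HOL-Combinatorics.Permutations"
begin

(* Suppose no such J* exists. Splitting any J within I by orientation, each half is monochromatic,
   hence has at least as many neighbours as elements, and the two neighbourhoods are disjoint; so
   Hall's condition holds and I injects into g1-neighbours of opposite orientation, none of which
   is a copy of P_inf. The remaining indices without 11...1 are g1-adjacent to every copy of P_inf,
   and there are at most 2^(4^k) of them but at least 2^(4^k) copies, so they inject into the copies.
   An injection that stays inside its domain only along edges between opposite orientations can be
   turned into a matching covering its domain (its cycles inside the domain have even length).
   Choosing words adding up to 22...2 on matched pairs and 11...1 on unmatched indices then gives a
   selection with as many 2s as 0s at every position, contradicting condition (A). *)

lemma tadd_commute: "tadd w u = tadd u w"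
  unfolding tadd_def by (induction w arbitrary: u) (auto split: list.split simp: zip_Cons1)

lemma tadd_eq_twos_nth:
  assumes "tadd w u = twos k" and "p < k"
  shows "w ! p + u ! p = 2"
proof -
  have "length (tadd w u) = k" using assms(1) by (simp add: twos_def)
  then have "p < length w" "p < length u" using assms(2) by (auto simp: tadd_def)
  then have "tadd w u ! p = w ! p + u ! p" by (simp add: tadd_def)
  then show ?thesis using assms by (simp add: twos_def)
qed

lemma g1_imp_tadd_eq_twos:
  assumes "{#A, B#} \<in> g1 k"
  shows "\<exists>w\<in>A. \<exists>u\<in>B. tadd w u = twos k"
proof -
  obtain W X where WX: "{#A, B#} = {#W, X#}" and "\<exists>w\<in>W. \<exists>x\<in>X. tadd w x = twos k"
    using assms unfolding g1_def by blast
  moreover from WX have "A = W \<and> B = X \<or> A = X \<and> B = W"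
    by (auto simp: add_eq_conv_ex)
  ultimately show ?thesis using tadd_commute by metis
qed

lemma count_image_mset_mset_set:
  assumes "finite D"
  shows "count (image_mset Q (mset_set D)) P = card {x\<in>D. Q x = P}"
  using assms by (simp add: count_image_mset Int_commute vimage_def Collect_conj_eq)

lemma card_permutes_Collect_inv:
  assumes "p permutes D"
  shows "card {i\<in>D. P (inv p i)} = card {i\<in>D. P i}"
proof -
  have "{i\<in>D. P (inv p i)} = p ` {i\<in>D. P i}"
  proof (intro equalityI subsetI)
    fix i assume "i \<in> {i\<in>D. P (inv p i)}"
    then show "i \<in> p ` {i\<in>D. P i}"
      using assms by (auto intro!: image_eqI[of _ _ "inv p i"]
          simp: permutes_inverses(1) permutes_in_image permutes_inv)
  qed (use assms in \<open>auto simp: permutes_inverses(2) permutes_in_image\<close>)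
  then show ?thesis
    using permutes_inj_on[OF assms] by (simp add: card_image)
qed

lemma condA_permutes:
  assumes p: "p permutes {1..\<Delta>}" and "condA k \<Delta> W"
  shows "condA k \<Delta> (W \<circ> p)"
  unfolding condA_def
proof (intro allI impI)
  let ?D = "{1..\<Delta>}"
  fix v assume v: "\<forall>i\<in>?D. v i \<in> (W \<circ> p) i"
  have "\<forall>i\<in>?D. (v \<circ> inv p) i \<in> W i"
    using v p by (metis comp_apply permutes_inverses(1) permutes_inv permutes_in_image)
  then obtain j where j: "j < k"
    "card {i\<in>?D. (v \<circ> inv p) i ! j = 2} > card {i\<in>?D. (v \<circ> inv p) i ! j = 0}"
    "card {i\<in>?D. (v \<circ> inv p) i ! j = 0} \<le> k"
    using \<open>condA k \<Delta> W\<close> unfolding condA_def by blast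
  have "card {i\<in>?D. (v \<circ> inv p) i ! j = a} = card {i\<in>?D. v i ! j = a}" for a
    using card_permutes_Collect_inv[OF p] by simp
  then show "\<exists>j<k. card {i\<in>?D. v i ! j = 2} > card {i\<in>?D. v i ! j = 0}
                 \<and> card {i\<in>?D. v i ! j = 0} \<le> k"
    using j by auto
qed

lemma condA_if_in_h1:
  assumes "image_mset Q (mset_set {1..\<Delta>}) \<in> h1 k \<Delta>"
  shows "condA k \<Delta> Q"
proof -
  obtain W where W: "image_mset Q (mset_set {1..\<Delta>}) = image_mset W (mset_set {1..\<Delta>})"
    and "condA k \<Delta> W"
    using assms unfolding h1_def by blast
  obtain p where p: "p permutes {1..\<Delta>}" and "\<forall>i\<in>{1..\<Delta>}. Q i = W (p i)"
    using image_mset_eq_implies_permutes[OF _ W] by blast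
  then have "condA k \<Delta> Q = condA k \<Delta> (W \<circ> p)"
    unfolding condA_def by simp
  then show ?thesis using condA_permutes[OF p \<open>condA k \<Delta> W\<close>] by simp
qed

definition hall_condition :: "'a set \<Rightarrow> ('a \<Rightarrow> 'b set) \<Rightarrow> bool" where
  "hall_condition A S \<longleftrightarrow> (\<forall>J\<subseteq>A. card J \<le> card (\<Union> (S ` J)))"

lemma hall_conditionD: "hall_condition A S \<Longrightarrow> J \<subseteq> A \<Longrightarrow> card J \<le> card (\<Union> (S ` J))"
  unfolding hall_condition_def by blast

lemma hall_condition_subset: "hall_condition A S \<Longrightarrow> B \<subseteq> A \<Longrightarrow> hall_condition B S"
  unfolding hall_condition_def by blast

text \<open>Since the cardinality of an infinite set is 0, Hall's condition forces finite neighbourhoods.\<close>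

lemma hall_condition_finite_UN:
  assumes "finite A" "hall_condition A S" "J \<subseteq> A"
  shows "finite (\<Union> (S ` J))"
proof (cases "J = {}")
  case False
  then have "0 < card J" using assms(1,3) finite_subset by fastforce
  also have "card J \<le> card (\<Union> (S ` J))" using hall_conditionD[OF assms(2,3)] .
  finally show ?thesis by (rule card_ge_0_finite)
qed simp

lemma hall_condition_Diff_singleton:
  assumes "finite A" "hall_condition A S"
    and surplus: "\<forall>J\<subseteq>A. J \<noteq> {} \<and> J \<noteq> A \<longrightarrow> card J < card (\<Union> (S ` J))"
    and "a \<in> A"
  shows "hall_condition (A - {a}) (\<lambda>j. S j - {x})"
  unfolding hall_condition_def
proof (intro allI impI)
  fix J assume J: "J \<subseteq> A - {a}"
  show "card J \<le> card (\<Union>j\<in>J. S j - {x})"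
  proof (cases "J = {}")
    case False
    then have "card J < card (\<Union> (S ` J))" using surplus J \<open>a \<in> A\<close> by blast
    moreover have "finite (\<Union> (S ` J))" using hall_condition_finite_UN assms(1,2) J by blast
    moreover have "(\<Union>j\<in>J. S j - {x}) = \<Union> (S ` J) - {x}" by blast
    ultimately show ?thesis by (simp add: card_Diff_singleton_if) linarith
  qed simp
qed

lemma hall_condition_Diff_critical:
  assumes "finite A" "hall_condition A S" "J0 \<subseteq> A"
    and critical: "card (\<Union> (S ` J0)) \<le> card J0"
  shows "hall_condition (A - J0) (\<lambda>j. S j - \<Union> (S ` J0))"
  unfolding hall_condition_def
proof (intro allI impI)
  fix K assume K: "K \<subseteq> A - J0"
  then have KJ0: "K \<union> J0 \<subseteq> A" using assms(3) by blast
  have "finite K" "finite J0" using K assms(1,3) finite_subset by blast+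
  moreover have "K \<inter> J0 = {}" using K by blast
  ultimately have "card K + card J0 = card (K \<union> J0)"
    by (simp add: card_Un_disjoint)
  also have "\<dots> \<le> card (\<Union> (S ` (K \<union> J0)))"
    using hall_conditionD[OF assms(2) KJ0] .
  also have "\<dots> = card (\<Union>j\<in>K. S j - \<Union> (S ` J0)) + card (\<Union> (S ` J0))"
  proof -
    have "finite (\<Union> (S ` (K \<union> J0)))"
      using hall_condition_finite_UN[OF assms(1,2) KJ0] .
    moreover have "\<Union> (S ` (K \<union> J0)) = (\<Union>j\<in>K. S j - \<Union> (S ` J0)) \<union> \<Union> (S ` J0)"
      by blast
    moreover have "(\<Union>j\<in>K. S j - \<Union> (S ` J0)) \<inter> \<Union> (S ` J0) = {}" by blast
    ultimately show ?thesis by (metis card_Un_disjoint finite_Un)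
  qed
  finally show "card K \<le> card (\<Union>j\<in>K. S j - \<Union> (S ` J0))" using critical by linarith
qed

definition distinct_representatives :: "'a set \<Rightarrow> ('a \<Rightarrow> 'b set) \<Rightarrow> ('a \<Rightarrow> 'b) \<Rightarrow> bool" where
  "distinct_representatives A S f \<longleftrightarrow> inj_on f A \<and> (\<forall>a\<in>A. f a \<in> S a)"

lemma distinct_representatives_insert:
  assumes "a \<in> A" "x \<in> S a" "distinct_representatives (A - {a}) (\<lambda>j. S j - {x}) f"
  shows "distinct_representatives A S (f(a := x))"
proof -
  have "x \<notin> f ` (A - {a})" using assms(3) unfolding distinct_representatives_def by blast
  then have "inj_on (f(a := x)) (insert a (A - {a}))"
    using assms(3) unfolding distinct_representatives_def
    by (intro iffD2[OF inj_on_insert]) (simp add: inj_on_fun_updI)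
  then show ?thesis
    using assms unfolding distinct_representatives_def insert_Diff[OF \<open>a \<in> A\<close>] by simp
qed

lemma distinct_representatives_Un_critical:
  assumes "J \<subseteq> A" "distinct_representatives J S f"
    and "distinct_representatives (A - J) (\<lambda>j. S j - \<Union> (S ` J)) g"
  shows "distinct_representatives A S (\<lambda>a. if a \<in> J then f a else g a)"
proof -
  have "f ` J \<subseteq> \<Union> (S ` J)" using assms(2) unfolding distinct_representatives_def by blast
  moreover have "g ` (A - J) \<inter> \<Union> (S ` J) = {}"
    using assms(3) unfolding distinct_representatives_def by blast
  ultimately have "inj_on (\<lambda>a. if a \<in> J then f a else g a) (J \<union> (A - J))"
    using assms(2,3) unfolding distinct_representatives_def by (intro inj_on_disjoint_Un) blast+
  moreover have "J \<union> (A - J) = A" using assms(1) by blast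
  ultimately show ?thesis
    using assms(2,3) unfolding distinct_representatives_def by auto
qed

theorem hall_marriage:
  assumes "finite A" "hall_condition A S"
  shows "\<exists>f. distinct_representatives A S f"
  using assms
proof (induction "card A" arbitrary: A S rule: less_induct)
  case less
  show ?case
  proof (cases "\<exists>J\<subseteq>A. J \<noteq> {} \<and> J \<noteq> A \<and> card (\<Union> (S ` J)) \<le> card J")
    case True
    then obtain J where J: "J \<subseteq> A" "J \<noteq> {}" "J \<noteq> A" "card (\<Union> (S ` J)) \<le> card J"
      by blast
    have "finite J" "finite (A - J)" using J(1) less.prems(1) finite_subset by auto
    have "J \<subset> A" "A - J \<subset> A" using J(1-3) by blast+
    then have "card J < card A" "card (A - J) < card A"
      using psubset_card_mono[OF less.prems(1)] by blast+
    then obtain f g where "distinct_representatives J S f"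
      and "distinct_representatives (A - J) (\<lambda>j. S j - \<Union> (S ` J)) g"
      using less.hyps \<open>finite J\<close> \<open>finite (A - J)\<close> hall_condition_subset[OF less.prems(2) J(1)]
        hall_condition_Diff_critical[OF less.prems J(1,4)] by meson
    then show ?thesis using distinct_representatives_Un_critical[OF J(1)] by blast
  next
    case False
    show ?thesis
    proof (cases "A = {}")
      case True
      then have "distinct_representatives A S undefined" by (simp add: distinct_representatives_def)
      then show ?thesis by blast
    next
      case nonempty: False
      then obtain a where "a \<in> A" by blast
      then have "card {a} \<le> card (\<Union> (S ` {a}))"
        using hall_conditionD[OF less.prems(2)] by blast
      then obtain x where "x \<in> S a" by fastforce
      have "\<forall>J\<subseteq>A. J \<noteq> {} \<and> J \<noteq> A \<longrightarrow> card J < card (\<Union> (S ` J))"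
        using False by (simp add: not_le) blast
      then have "hall_condition (A - {a}) (\<lambda>j. S j - {x})"
        using hall_condition_Diff_singleton[OF less.prems _ \<open>a \<in> A\<close>] by blast
      moreover have "card (A - {a}) < card A" "finite (A - {a})"
        using card_Diff1_less[OF less.prems(1) \<open>a \<in> A\<close>] less.prems(1) by auto
      ultimately obtain f where "distinct_representatives (A - {a}) (\<lambda>j. S j - {x}) f"
        using less.hyps by blast
      then show ?thesis
        using distinct_representatives_insert[of a A x S f] \<open>a \<in> A\<close> \<open>x \<in> S a\<close> by blast
    qed
  qed
qed

lemma hall_condition_if_no_monochromatic_surplus:
  fixes \<alpha> :: "'a \<Rightarrow> orient"
  assumes N: "\<And>J. N J = {i\<in>D. \<exists>j\<in>J. E i j \<and> \<alpha> i \<noteq> \<alpha> j}" and "finite D"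
    and no_surplus: "\<not> (\<exists>J\<subseteq>I. card J > card (N J) \<and> (\<forall>j\<in>J. \<forall>i\<in>N J. \<alpha> j \<noteq> \<alpha> i))"
  shows "hall_condition I (\<lambda>j. N {j})"
  unfolding hall_condition_def
proof (intro allI impI)
  fix J assume "J \<subseteq> I"
  have monochromatic: "card J' \<le> card (N J')" if "J' \<subseteq> J" "\<forall>j\<in>J'. \<alpha> j = a" for J' a
  proof -
    have "\<forall>j\<in>J'. \<forall>i\<in>N J'. \<alpha> j \<noteq> \<alpha> i" using that(2) unfolding N by auto
    then show ?thesis using no_surplus that(1) \<open>J \<subseteq> I\<close> by (meson not_le order_trans)
  qed
  define J\<^sub>o\<^sub>u\<^sub>t where "J\<^sub>o\<^sub>u\<^sub>t = {j\<in>J. \<alpha> j = Out}"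
  define J\<^sub>i\<^sub>n where "J\<^sub>i\<^sub>n = {j\<in>J. \<alpha> j = In}"
  have not_Out: "x \<noteq> Out \<longleftrightarrow> x = In" for x :: orient by (cases x) simp_all
  have J: "J = J\<^sub>o\<^sub>u\<^sub>t \<union> J\<^sub>i\<^sub>n" "J\<^sub>o\<^sub>u\<^sub>t \<inter> J\<^sub>i\<^sub>n = {}"
    unfolding J\<^sub>o\<^sub>u\<^sub>t_def J\<^sub>i\<^sub>n_def using not_Out by auto
  have NJ: "N J = N J\<^sub>o\<^sub>u\<^sub>t \<union> N J\<^sub>i\<^sub>n"
    using J(1) unfolding N by blast
  have "N J\<^sub>o\<^sub>u\<^sub>t \<inter> N J\<^sub>i\<^sub>n = {}"
    unfolding N J\<^sub>o\<^sub>u\<^sub>t_def J\<^sub>i\<^sub>n_def using not_Out by auto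
  have "card J \<le> card (N J)"
  proof (cases "finite J")
    case True
    have "card J = card J\<^sub>o\<^sub>u\<^sub>t + card J\<^sub>i\<^sub>n"
      using J True by (metis card_Un_disjoint finite_Un)
    also have "\<dots> \<le> card (N J\<^sub>o\<^sub>u\<^sub>t) + card (N J\<^sub>i\<^sub>n)"
      unfolding J\<^sub>o\<^sub>u\<^sub>t_def J\<^sub>i\<^sub>n_def by (intro add_mono monochromatic) auto
    also have "\<dots> = card (N J)"
      using NJ \<open>N J\<^sub>o\<^sub>u\<^sub>t \<inter> N J\<^sub>i\<^sub>n = {}\<close> \<open>finite D\<close> N by (simp add: card_Un_disjoint)
    finally show ?thesis .
  qed simp
  moreover have "(\<Union>j\<in>J. N {j}) = N J" unfolding N by blast
  ultimately show "card J \<le> card (\<Union>j\<in>J. N {j})" by simp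
qed

lemma alternating_injection_if_no_monochromatic_surplus:
  fixes \<alpha> :: "'a \<Rightarrow> orient"
  assumes N: "\<And>J. N J = {i\<in>D. \<exists>j\<in>J. E i j \<and> \<alpha> i \<noteq> \<alpha> j}" and "finite D" "I \<subseteq> D"
    and no_surplus: "\<not> (\<exists>J\<subseteq>I. card J > card (N J) \<and> (\<forall>j\<in>J. \<forall>i\<in>N J. \<alpha> j \<noteq> \<alpha> i))"
  shows "\<exists>\<mu>. inj_on \<mu> I \<and> (\<forall>j\<in>I. \<mu> j \<in> D \<and> E (\<mu> j) j \<and> \<alpha> (\<mu> j) \<noteq> \<alpha> j)"
proof -
  have "hall_condition I (\<lambda>j. N {j})"
    by (rule hall_condition_if_no_monochromatic_surplus[OF N \<open>finite D\<close> no_surplus])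
  then obtain \<mu> where "distinct_representatives I (\<lambda>j. N {j}) \<mu>"
    using hall_marriage finite_subset[OF \<open>I \<subseteq> D\<close> \<open>finite D\<close>] by blast
  then show ?thesis unfolding distinct_representatives_def N by blast
qed

text \<open>A matching of the graph R, encoded as the involution exchanging matched partners and fixing
  unmatched vertices.\<close>

definition matching :: "('a \<Rightarrow> 'a \<Rightarrow> bool) \<Rightarrow> ('a \<Rightarrow> 'a) \<Rightarrow> bool" where
  "matching R \<sigma> \<longleftrightarrow> (\<forall>x. \<sigma> (\<sigma> x) = x) \<and> (\<forall>x. \<sigma> x \<noteq> x \<longrightarrow> R x (\<sigma> x))"

lemma matching_of_alternating_permutation:
  fixes c :: "'a \<Rightarrow> bool"
  assumes "inj_on \<mu> I" "\<mu> ` I = I" "symp R"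
    and alternating: "\<forall>j\<in>I. R j (\<mu> j) \<and> c (\<mu> j) \<noteq> c j"
  shows "\<exists>\<sigma>. matching R \<sigma> \<and> (\<forall>j\<in>I. \<sigma> j \<noteq> j)"
proof -
  \<comment> \<open>Colours alternate along the cycles of \<mu>, so every c-vertex can be matched to its image.\<close>
  define \<sigma> where "\<sigma> x = (if x \<notin> I then x else if c x then \<mu> x else inv_into I \<mu> x)" for x
  have pred: "inv_into I \<mu> x \<in> I \<and> \<mu> (inv_into I \<mu> x) = x" if "x \<in> I" for x
    using assms(2) that by (metis inv_into_into f_inv_into_f)
  have forward: "\<mu> x \<in> I \<and> \<not> c (\<mu> x) \<and> \<sigma> x = \<mu> x \<and> \<sigma> (\<mu> x) = x" if "x \<in> I" "c x" for x
    using that assms(1,2) alternating unfolding \<sigma>_def by (auto simp: inv_into_f_f)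
  have backward: "\<sigma> x = inv_into I \<mu> x" if "x \<in> I" "\<not> c x" for x
    using that unfolding \<sigma>_def by simp
  have "\<sigma> (\<sigma> x) = x \<and> (\<sigma> x \<noteq> x \<longrightarrow> R x (\<sigma> x)) \<and> (x \<in> I \<longrightarrow> \<sigma> x \<noteq> x)" for x
  proof (cases "x \<in> I")
    case True
    show ?thesis
    proof (cases "c x")
      case True
      then show ?thesis using forward[OF \<open>x \<in> I\<close>] alternating \<open>x \<in> I\<close> by metis
    next
      case False
      define z where "z = inv_into I \<mu> x"
      have "z \<in> I" "\<mu> z = x" using pred[OF \<open>x \<in> I\<close>] unfolding z_def by auto
      then have "c z" using alternating False by metis
      then show ?thesis
        using forward[OF \<open>z \<in> I\<close>] backward[OF \<open>x \<in> I\<close> False] alternating \<open>z \<in> I\<close>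
          \<open>\<mu> z = x\<close> \<open>symp R\<close> unfolding z_def by (metis sympD)
    qed
  qed (simp add: \<sigma>_def)
  then show ?thesis unfolding matching_def by blast
qed

lemma matching_add_edge:
  assumes "matching (\<lambda>x z. R x z \<and> x \<notin> {j, y} \<and> z \<notin> {j, y}) \<sigma>"
    and "R j y" "symp R" "j \<noteq> y"
  shows "matching R (\<sigma>(j := y, y := j))"
proof -
  have fixed: "\<sigma> j = j" "\<sigma> y = y" and inv: "\<forall>x. \<sigma> (\<sigma> x) = x"
    using assms(1) unfolding matching_def by auto
  have moved: "\<sigma> x \<noteq> j" "\<sigma> x \<noteq> y" if "x \<noteq> j" "x \<noteq> y" for x
    using that fixed inv by metis+
  show ?thesis
    unfolding matching_def
  proof (intro conjI allI impI)
    fix x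
    show "(\<sigma>(j := y, y := j)) ((\<sigma>(j := y, y := j)) x) = x"
      using moved[of x] inv \<open>j \<noteq> y\<close> by auto
    show "R x ((\<sigma>(j := y, y := j)) x)" if "(\<sigma>(j := y, y := j)) x \<noteq> x"
      using that assms(1-3) unfolding matching_def by (auto dest: sympD)
  qed
qed

lemma matching_of_injection:
  fixes c :: "'a \<Rightarrow> bool"
  assumes "finite I" "inj_on \<mu> I" "symp R"
    and "\<forall>j\<in>I. R j (\<mu> j) \<and> \<mu> j \<noteq> j"
    and "\<forall>j\<in>I. \<mu> j \<in> I \<longrightarrow> c (\<mu> j) \<noteq> c j"
  shows "\<exists>\<sigma>. matching R \<sigma> \<and> (\<forall>j\<in>I. \<sigma> j \<noteq> j)"
  using assms
proof (induction "card I" arbitrary: I R rule: less_induct)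
  case less
  show ?case
  proof (cases "I \<subseteq> \<mu> ` I")
    case True
    then have "I = \<mu> ` I"
      using less.prems(1) by (intro card_seteq card_image_le finite_imageI)
    then show ?thesis
      using less.prems(2-5) matching_of_alternating_permutation[of \<mu> I R c] by auto
  next
    case False
    then obtain j where "j \<in> I" "j \<notin> \<mu> ` I" by blast
    define y where "y = \<mu> j"
    have "y \<noteq> j" "R j y" using less.prems(4) \<open>j \<in> I\<close> unfolding y_def by auto
    define I' where "I' = I - {j, y}"
    \<comment> \<open>Restricting R to edges avoiding j and y keeps both unmatched in the recursive matching.\<close>
    define R' where "R' = (\<lambda>x z. R x z \<and> x \<notin> {j, y} \<and> z \<notin> {j, y})"
    have "I' \<subseteq> I" "finite I'" using less.prems(1) unfolding I'_def by auto
    have "card I' < card I"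
      using less.prems(1) \<open>j \<in> I\<close> unfolding I'_def by (intro psubset_card_mono) auto
    moreover have "R' i (\<mu> i) \<and> \<mu> i \<noteq> i" if "i \<in> I'" for i
    proof -
      have "i \<in> I" "i \<noteq> j" using that unfolding I'_def by auto
      then have "\<mu> i \<noteq> y" using less.prems(2) \<open>j \<in> I\<close> unfolding y_def by (auto dest: inj_onD)
      moreover have "\<mu> i \<noteq> j" using \<open>i \<in> I\<close> \<open>j \<notin> \<mu> ` I\<close> by auto
      ultimately show ?thesis using less.prems(4) \<open>i \<in> I\<close> that unfolding R'_def I'_def by auto
    qed
    moreover have "symp R'" using \<open>symp R\<close> unfolding R'_def symp_def by blast
    ultimately obtain \<sigma> where \<sigma>: "matching R' \<sigma>" "\<forall>i\<in>I'. \<sigma> i \<noteq> i"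
      using less.hyps[OF _ \<open>finite I'\<close> inj_on_subset[OF less.prems(2) \<open>I' \<subseteq> I\<close>]]
        less.prems(5) \<open>I' \<subseteq> I\<close> by blast
    have "matching R (\<sigma>(j := y, y := j))"
      using matching_add_edge[OF \<sigma>(1)[unfolded R'_def] \<open>R j y\<close> \<open>symp R\<close>] \<open>y \<noteq> j\<close> by blast
    moreover have "\<forall>i\<in>I. (\<sigma>(j := y, y := j)) i \<noteq> i"
      using \<sigma>(2) \<open>y \<noteq> j\<close> unfolding I'_def by auto
    ultimately show ?thesis by blast
  qed
qed

lemma matching_covering_Un:
  fixes c :: "'a \<Rightarrow> bool"
  assumes "finite I" "finite B" "finite C" "symp R"
    and "inj_on \<mu> I" "\<forall>j\<in>I. R j (\<mu> j) \<and> c (\<mu> j) \<noteq> c j \<and> \<mu> j \<notin> C"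
    and "card B \<le> card C" "\<forall>b\<in>B. \<forall>x\<in>C. R b x" "C \<inter> (I \<union> B) = {}"
  shows "\<exists>\<sigma>. matching R \<sigma> \<and> (\<forall>x\<in>I \<union> B. \<sigma> x \<noteq> x)"
proof -
  obtain \<nu> where \<nu>: "inj_on \<nu> B" "\<nu> ` B \<subseteq> C"
    using card_le_inj[OF assms(2,3,7)] by blast
  define \<mu>' where "\<mu>' x = (if x \<in> I then \<mu> x else \<nu> x)" for x
  have "\<mu> ` I \<inter> \<nu> ` B = {}" using assms(6) \<nu>(2) by blast
  then have inj: "inj_on \<mu>' (I \<union> B)"
    unfolding \<mu>'_def by (rule inj_on_disjoint_Un[OF assms(5) \<nu>(1)])
  have "R j (\<mu>' j) \<and> \<mu>' j \<noteq> j" if "j \<in> I \<union> B" for j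
  proof (cases "j \<in> I")
    case False
    then have "j \<in> B" "\<nu> j \<in> C" using that \<nu>(2) by auto
    then show ?thesis using assms(8,9) False unfolding \<mu>'_def by auto
  qed (use assms(6) in \<open>force simp: \<mu>'_def\<close>)
  moreover have "\<forall>j\<in>I \<union> B. \<mu>' j \<in> I \<union> B \<longrightarrow> c (\<mu>' j) \<noteq> c j"
    using assms(6,9) \<nu>(2) unfolding \<mu>'_def by auto
  moreover have "finite (I \<union> B)" using assms(1,2) by blast
  ultimately show ?thesis
    using matching_of_injection[OF _ inj \<open>symp R\<close>] by (metis (no_types, lifting))
qed

lemma involution_choose_labels:
  fixes \<sigma> :: "'a::linorder \<Rightarrow> 'a"
  assumes "\<forall>x. \<sigma> (\<sigma> x) = x" "symp T"
    and "\<forall>x. \<sigma> x \<noteq> x \<longrightarrow> (\<exists>w\<in>L x. \<exists>u\<in>L (\<sigma> x). T w u)"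
  shows "\<exists>v. \<forall>x. \<sigma> x \<noteq> x \<longrightarrow> v x \<in> L x \<and> T (v x) (v (\<sigma> x))"
proof -
  have "\<forall>x. \<exists>p. \<sigma> x \<noteq> x \<longrightarrow> fst p \<in> L x \<and> snd p \<in> L (\<sigma> x) \<and> T (fst p) (snd p)"
    using assms(3) by force
  then obtain p where p: "\<And>x. \<sigma> x \<noteq> x \<Longrightarrow> fst (p x) \<in> L x \<and> snd (p x) \<in> L (\<sigma> x) \<and> T (fst (p x)) (snd (p x))"
    by (metis choice)
  \<comment> \<open>The smaller end of each pair chooses the labels of both ends.\<close>
  define v where "v x = (if x < \<sigma> x then fst (p x) else snd (p (\<sigma> x)))" for x
  have "v x \<in> L x \<and> T (v x) (v (\<sigma> x))" if "\<sigma> x \<noteq> x" for x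
  proof (cases "x < \<sigma> x")
    case True
    then show ?thesis using p[OF that] assms(1) unfolding v_def by (metis less_asym)
  next
    case False
    then have "\<sigma> x < x" using that by simp
    have "\<sigma> (\<sigma> x) \<noteq> \<sigma> x" using that assms(1) by metis
    moreover have "v x = snd (p (\<sigma> x))" "v (\<sigma> x) = fst (p (\<sigma> x))"
      using False \<open>\<sigma> x < x\<close> assms(1) unfolding v_def by simp_all
    ultimately show ?thesis
      using p[of "\<sigma> x"] assms(1) sympD[OF \<open>symp T\<close>] by metis
  qed
  then show ?thesis by blast
qed

lemma card_nth_eq_two_eq_card_nth_eq_zero:
  assumes "finite D" "\<forall>x. \<sigma> (\<sigma> x) = x" "\<forall>x\<in>D. \<sigma> x \<in> D"
    and "\<forall>x\<in>D. \<sigma> x \<noteq> x \<longrightarrow> tadd (v x) (v (\<sigma> x)) = twos k"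
    and "\<forall>x\<in>D. \<sigma> x = x \<longrightarrow> v x = ones k" and "q < k"
  shows "card {x\<in>D. v x ! q = 2} = card {x\<in>D. v x ! q = 0}"
proof -
  have swap: "\<sigma> x \<in> D \<and> v (\<sigma> x) ! q = 2 - a" if "x \<in> D" "v x ! q = a" "a \<noteq> 1" for x a
  proof -
    have "\<sigma> x \<noteq> x" using that assms(5,6) by (auto simp: ones_def)
    then have "v x ! q + v (\<sigma> x) ! q = 2"
      using assms(4) \<open>x \<in> D\<close> tadd_eq_twos_nth[OF _ \<open>q < k\<close>] by blast
    then show ?thesis using that assms(3) by auto
  qed
  have "inj_on \<sigma> X" for X using assms(2) by (metis inj_onI)
  moreover have "\<sigma> ` {x\<in>D. v x ! q = 2} \<subseteq> {x\<in>D. v x ! q = 0}"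
    and "\<sigma> ` {x\<in>D. v x ! q = 0} \<subseteq> {x\<in>D. v x ! q = 2}"
    using swap[of _ 2] swap[of _ 0] by auto
  moreover have "finite {x\<in>D. v x ! q = a}" for a using assms(1) by simp
  ultimately show ?thesis by (meson card_inj_on_le le_antisym)
qed

lemma not_condA_if_unmatched_contain_ones:
  assumes "matching (\<lambda>x y. {#Q x, Q y#} \<in> g1 k \<and> x \<in> {1..\<Delta>} \<and> y \<in> {1..\<Delta>}) \<sigma>"
    and "\<forall>x\<in>{1..\<Delta>}. \<sigma> x = x \<longrightarrow> ones k \<in> Q x"
  shows "\<not> condA k \<Delta> Q"
proof
  assume "condA k \<Delta> Q"
  have inv: "\<forall>x. \<sigma> (\<sigma> x) = x"
    and pairs: "\<forall>x. \<sigma> x \<noteq> x \<longrightarrow> {#Q x, Q (\<sigma> x)#} \<in> g1 k \<and> x \<in> {1..\<Delta>} \<and> \<sigma> x \<in> {1..\<Delta>}"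
    using assms(1) unfolding matching_def by auto
  have "symp (\<lambda>w u. tadd w u = twos k)" by (rule sympI) (simp add: tadd_commute)
  moreover have "\<forall>x. \<sigma> x \<noteq> x \<longrightarrow> (\<exists>w\<in>Q x. \<exists>u\<in>Q (\<sigma> x). tadd w u = twos k)"
    using pairs g1_imp_tadd_eq_twos by blast
  ultimately obtain v where v: "\<forall>x. \<sigma> x \<noteq> x \<longrightarrow> v x \<in> Q x \<and> tadd (v x) (v (\<sigma> x)) = twos k"
    using involution_choose_labels[OF inv] by blast
  define v' where "v' x = (if \<sigma> x = x then ones k else v x)" for x
  have "\<forall>i\<in>{1..\<Delta>}. v' i \<in> Q i" using v assms(2) unfolding v'_def by auto
  then obtain q where "q < k" and
    "card {i\<in>{1..\<Delta>}. v' i ! q = 2} > card {i\<in>{1..\<Delta>}. v' i ! q = 0}"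
    using \<open>condA k \<Delta> Q\<close> unfolding condA_def by blast
  moreover have "card {i\<in>{1..\<Delta>}. v' i ! q = 2} = card {i\<in>{1..\<Delta>}. v' i ! q = 0}"
  proof (rule card_nth_eq_two_eq_card_nth_eq_zero[OF _ inv _ _ _ \<open>q < k\<close>])
    show "\<forall>x\<in>{1..\<Delta>}. \<sigma> x \<in> {1..\<Delta>}" using pairs by metis
    show "\<forall>x\<in>{1..\<Delta>}. \<sigma> x \<noteq> x \<longrightarrow> tadd (v' x) (v' (\<sigma> x)) = twos k"
      using v inv unfolding v'_def by metis
  qed (simp_all add: v'_def)
  ultimately show False by simp
qed

lemma card_ne_le_card_eq_if_count_ge:
  assumes "finite D" "2 * m \<le> card D" "count (image_mset Q (mset_set D)) P \<ge> card D - m"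
  shows "card {i\<in>D. Q i \<noteq> P} \<le> card {i\<in>D. Q i = P}"
proof -
  have "card {i\<in>D. Q i \<noteq> P} + card {i\<in>D. Q i = P} = card D"
    using assms(1) by (subst card_Un_disjoint[symmetric]) (auto intro: arg_cong[where f = card])
  moreover have "card {i\<in>D. Q i = P} \<ge> card D - m"
    using assms(3) count_image_mset_mset_set[OF assms(1), of Q P] by linarith
  ultimately show ?thesis using assms(2) by linarith
qed

lemma matching_leaving_unmatched_only_ones:
  fixes k \<Delta> m :: nat and Q :: "nat \<Rightarrow> nat list set" and Pinf :: "nat list set"
    and \<alpha> :: "nat \<Rightarrow> orient"
  defines "D \<equiv> {1..\<Delta>}"
  defines "I \<equiv> {i\<in>D. {#Q i, Pinf#} \<notin> g1 k \<and> ones k \<notin> Q i}"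
  assumes "2 * m \<le> \<Delta>" "count (image_mset Q (mset_set D)) Pinf \<ge> \<Delta> - m" "ones k \<in> Pinf"
    and \<mu>: "inj_on \<mu> I" "\<forall>j\<in>I. \<mu> j \<in> D \<and> {#Q (\<mu> j), Q j#} \<in> g1 k \<and> \<alpha> (\<mu> j) \<noteq> \<alpha> j"
  shows "\<exists>\<sigma>. matching (\<lambda>x y. {#Q x, Q y#} \<in> g1 k \<and> x \<in> D \<and> y \<in> D) \<sigma>
           \<and> (\<forall>x\<in>D. \<sigma> x = x \<longrightarrow> ones k \<in> Q x)"
proof -
  define C where "C = {i\<in>D. Q i = Pinf}"
  define B where "B = {i\<in>D - C. i \<notin> I \<and> ones k \<notin> Q i}"
  define R where "R i j \<longleftrightarrow> {#Q i, Q j#} \<in> g1 k \<and> i \<in> D \<and> j \<in> D" for i j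
  have "finite D" "finite I" "finite B" "finite C"
    unfolding D_def I_def B_def C_def by auto
  have "symp R" unfolding R_def symp_def by (simp add: add_mset_commute)
  have \<mu>_alternating: "\<forall>j\<in>I. R j (\<mu> j) \<and> (\<alpha> (\<mu> j) = Out) \<noteq> (\<alpha> j = Out) \<and> \<mu> j \<notin> C"
  proof
    fix j assume "j \<in> I"
    then have "j \<in> D" "{#Q j, Pinf#} \<notin> g1 k" "\<mu> j \<in> D" "{#Q j, Q (\<mu> j)#} \<in> g1 k"
      "\<alpha> (\<mu> j) \<noteq> \<alpha> j"
      using \<mu>(2) unfolding I_def by (auto simp: add_mset_commute)
    then show "R j (\<mu> j) \<and> (\<alpha> (\<mu> j) = Out) \<noteq> (\<alpha> j = Out) \<and> \<mu> j \<notin> C"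
      unfolding R_def C_def by (cases "\<alpha> (\<mu> j)"; cases "\<alpha> j") auto
  qed
  have "card B \<le> card {i\<in>D. Q i \<noteq> Pinf}"
    using \<open>finite D\<close> unfolding B_def C_def by (intro card_mono) auto
  also have "\<dots> \<le> card C"
    unfolding C_def using assms(3,4) \<open>finite D\<close>
    by (intro card_ne_le_card_eq_if_count_ge[where m = m]) (simp_all add: D_def)
  finally have "card B \<le> card C" .
  moreover have "\<forall>b\<in>B. \<forall>x\<in>C. R b x" "C \<inter> (I \<union> B) = {}"
    using assms(5) unfolding R_def B_def C_def I_def by auto
  ultimately obtain \<sigma> where \<sigma>: "matching R \<sigma>" "\<forall>x\<in>I \<union> B. \<sigma> x \<noteq> x"
    using matching_covering_Un[OF \<open>finite I\<close> \<open>finite B\<close> \<open>finite C\<close> \<open>symp R\<close> \<mu>(1)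
        \<mu>_alternating] by blast
  moreover have "\<forall>x\<in>D. \<sigma> x = x \<longrightarrow> ones k \<in> Q x"
    using \<sigma>(2) assms(5) unfolding B_def C_def by auto
  ultimately show ?thesis unfolding R_def by blast
qed

theorem lemma6:
  fixes k \<Delta> :: nat
    and Q :: "nat \<Rightarrow> nat list set"
    and Pinf :: "nat list set"
    and \<alpha> :: "nat \<Rightarrow> orient"
  assumes "k \<ge> 2"
    and "\<Delta> \<ge> 2 ^ (4 ^ k + 1)"
    and "image_mset Q (mset_set {1..\<Delta>}) \<in> h1 k \<Delta>"
    and "Pinf \<in># image_mset Q (mset_set {1..\<Delta>})"
    and "count (image_mset Q (mset_set {1..\<Delta>})) Pinf \<ge> \<Delta> - 2 ^ (4 ^ k)"
    and "ones k \<in> Pinf"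
  defines "I \<equiv> {i\<in>{1..\<Delta>}. {#Q i, Pinf#} \<notin> g1 k \<and> ones k \<notin> Q i}"
    and "N \<equiv> (\<lambda>J. {i\<in>{1..\<Delta>}. \<exists>j\<in>J. {#Q i, Q j#} \<in> g1 k \<and> \<alpha> i \<noteq> \<alpha> j})"
  shows "\<exists>J\<subseteq>I. card J > card (N J) \<and> (\<forall>j\<in>J. \<forall>i\<in>N J. \<alpha> j \<noteq> \<alpha> i)"
proof (rule ccontr)
  assume no_surplus: "\<not> ?thesis"
  have "I \<subseteq> {1..\<Delta>}" unfolding I_def by blast
  then obtain \<mu> where "inj_on \<mu> I"
    and "\<forall>j\<in>I. \<mu> j \<in> {1..\<Delta>} \<and> {#Q (\<mu> j), Q j#} \<in> g1 k \<and> \<alpha> (\<mu> j) \<noteq> \<alpha> j"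
    using alternating_injection_if_no_monochromatic_surplus[OF
        N_def[THEN meta_eq_to_obj_eq, THEN fun_cong] finite_atLeastAtMost _ no_surplus] by blast
  moreover have "2 * 2 ^ 4 ^ k \<le> \<Delta>" using assms(2) by simp
  ultimately obtain \<sigma>
    where "matching (\<lambda>x y. {#Q x, Q y#} \<in> g1 k \<and> x \<in> {1..\<Delta>} \<and> y \<in> {1..\<Delta>}) \<sigma>"
      and "\<forall>x\<in>{1..\<Delta>}. \<sigma> x = x \<longrightarrow> ones k \<in> Q x"
    using matching_leaving_unmatched_only_ones[OF _ assms(5,6)] unfolding I_def by blast
  then have "\<not> condA k \<Delta> Q" by (rule not_condA_if_unmatched_contain_ones)
  then show False using condA_if_in_h1[OF assms(3)] by contradiction
qed

end
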